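(* Let $\Sigma$ be a finite predictive theory and $A \Rightarrow B$ a predictive formula. Then the procedure PseudoLinClosure executed with arguments $\Sigma$, $A$ and $\mathit{Max} = u(B)$ terminates after finitely many steps, and for its returned value $M$ we have $\Sigma \vdash A \Rightarrow B$ if and only if $B \subseteq M$.
   Context: $Y$ is a non-empty finite set of attributes and $\mathcal{T}_Y = \{y^i \mid y \in Y, i \in \mathbb{Z}\}$; $M + j = \{y^{i+j} \mid y^i \in M\}$. A formula is $A \Rightarrow B$ with $A,B$ finite subsets of $\mathcal{T}_Y$; a theory is a set of formulas. For finite non-empty $M$, $l(M) = \min\{i \mid y^i \in M\}$, $u(M) = \max\{i \mid y^i \in M\}$. $A \Rightarrow B$ is predictive if $A,B \neq \emptyset$ and $i \le j$ for all $x^i \in A$, $y^j \in B$; a theory is predictive if all its formulas are. Deduction rules (for finite $A,B,C,D$, $i \in \mathbb{Z}$): (Ax) infer $A \cup B \Rightarrow A$; (Cut) from $A \Rightarrow B$ and $B \cup C \Rightarrow D$ infer $A \cup C \Rightarrow D$; (Shf) from $A \Rightarrow B$ infer $A+i \Rightarrow B+i$; $\Sigma \vdash A \Rightarrow B$ means a finite sequence ending with $A \Rightarrow B$ exists whose members are in $\Sigma$ or follow from earlier members by these rules. Procedure PseudoLinClosure$(\Sigma, A, \mathit{Max})$: for every $E \Rightarrow F \in \Sigma$ and every integer $i$ with $l(A)-l(E) \le i \le \mathit{Max}-l(F)$, set $\mathit{count}[E \Rightarrow F, i] := |E|$ and, for every $y^j \in E$, add the pair $\langle E \Rightarrow F,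 i\rangle$ to the list $\mathit{list}[y^{i+j}]$ (all lists initially empty). Set $M := A$ and $\mathit{update} := A$. While $\mathit{update} \neq \emptyset$: choose $y^i \in \mathit{update}$, remove it from $\mathit{update}$, and for every $\langle E \Rightarrow F, j\rangle \in \mathit{list}[y^i]$ decrement $\mathit{count}[E \Rightarrow F, j]$ by one; if it becomes $0$, put $\mathit{new} := (F+j) \setminus M$, $M := M \cup \mathit{new}$, $\mathit{update} := \mathit{update} \cup \mathit{new}$. Finally return $M$. *)

theory Defs
  imports Main
begin

text \<open>Attributes: a finite (hence non-empty) type 'a playing the role of Y.
  Temporal attributes y^i are pairs (y, i).\<close>

type_synonym 'a tattr = "'a \<times> int"
type_synonym 'a fml = "'a tattr set \<times> 'a tattr set"

definition shift :: "'a tattr set \<Rightarrow> int \<Rightarrow> 'a tattr set" where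
  "shift M j = (\<lambda>(y, i). (y, i + j)) ` M"

definition lo :: "'a tattr set \<Rightarrow> int" where
  "lo M = Min (snd ` M)"

definition up :: "'a tattr set \<Rightarrow> int" where
  "up M = Max (snd ` M)"

definition is_formula :: "('a::finite) fml \<Rightarrow> bool" where
  "is_formula f \<longleftrightarrow> finite (fst f) \<and> finite (snd f)"

definition predictive :: "('a::finite) fml \<Rightarrow> bool" where
  "predictive f \<longleftrightarrow> is_formula f \<and> fst f \<noteq> {} \<and> snd f \<noteq> {} \<and>
     (\<forall>x i y j. (x, i) \<in> fst f \<longrightarrow> (y, j) \<in> snd f \<longrightarrow> i \<le> j)"

definition predictive_theory :: "('a::finite) fml set \<Rightarrow> bool" where
  "predictive_theory \<Sigma> \<longleftrightarrow> (\<forall>f\<in>\<Sigma>. predictive f)"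

inductive derivable :: "('a::finite) fml set \<Rightarrow> 'a fml \<Rightarrow> bool" for \<Sigma> where
  Hyp: "f \<in> \<Sigma> \<Longrightarrow> derivable \<Sigma> f"
| Ax: "finite A \<Longrightarrow> finite B \<Longrightarrow> derivable \<Sigma> (A \<union> B, A)"
| Cut: "finite A \<Longrightarrow> finite B \<Longrightarrow> finite C \<Longrightarrow> finite D \<Longrightarrow>
        derivable \<Sigma> (A, B) \<Longrightarrow> derivable \<Sigma> (B \<union> C, D) \<Longrightarrow> derivable \<Sigma> (A \<union> C, D)"
| Shf: "finite A \<Longrightarrow> finite B \<Longrightarrow> derivable \<Sigma> (A, B) \<Longrightarrow> derivable \<Sigma> (shift A i, shift B i)"

text \<open>Procedure PseudoLinClosure(\<Sigma>, A, Max), modelled as a nondeterministic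
  small-step transition system.  The pairs \<langle>E \<Rightarrow> F, i\<rangle> created during
  initialisation form the set plc_idx; list[z] is plc_list z.  The field
  pend holds the not-yet-processed part of list[y^i] for the element y^i
  currently being processed (the inner for-loop, in arbitrary order).\<close>

definition plc_idx :: "('a::finite) fml set \<Rightarrow> 'a tattr set \<Rightarrow> int \<Rightarrow> ('a fml \<times> int) set" where
  "plc_idx \<Sigma> A Mx = {((E, F), i). (E, F) \<in> \<Sigma> \<and> lo A - lo E \<le> i \<and> i \<le> Mx - lo F}"

definition plc_list :: "('a::finite) fml set \<Rightarrow> 'a tattr set \<Rightarrow> int \<Rightarrow> 'a tattr \<Rightarrow> ('a fml \<times> int) set" where
  "plc_list \<Sigma> A Mx z = {p \<in> plc_idx \<Sigma> A Mx. z \<in> shift (fst (fst p)) (snd p)}"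

record 'a plc_state =
  stM :: "'a tattr set"
  stUpd :: "'a tattr set"
  stCnt :: "'a fml \<times> int \<Rightarrow> int"
  stPend :: "('a fml \<times> int) set"

definition plc_init :: "'a tattr set \<Rightarrow> ('a::finite) plc_state" where
  "plc_init A = \<lparr> stM = A, stUpd = A, stCnt = (\<lambda>((E, F), i). int (card E)), stPend = {} \<rparr>"

inductive plc_step :: "('a::finite) fml set \<Rightarrow> 'a tattr set \<Rightarrow> int \<Rightarrow> 'a plc_state \<Rightarrow> 'a plc_state \<Rightarrow> bool"
  for \<Sigma> A Mx where
  pick: "stPend s = {} \<Longrightarrow> y \<in> stUpd s \<Longrightarrow>
     plc_step \<Sigma> A Mx s (s\<lparr> stUpd := stUpd s - {y}, stPend := plc_list \<Sigma> A Mx y \<rparr>)"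
| dec_nonzero: "p \<in> stPend s \<Longrightarrow> stCnt s p - 1 \<noteq> 0 \<Longrightarrow>
     plc_step \<Sigma> A Mx s (s\<lparr> stCnt := (stCnt s)(p := stCnt s p - 1), stPend := stPend s - {p} \<rparr>)"
| dec_zero: "p \<in> stPend s \<Longrightarrow> stCnt s p - 1 = 0 \<Longrightarrow> p = ((E, F), j) \<Longrightarrow>
     new = shift F j - stM s \<Longrightarrow>
     plc_step \<Sigma> A Mx s (s\<lparr> stM := stM s \<union> new, stUpd := stUpd s \<union> new,
        stCnt := (stCnt s)(p := stCnt s p - 1), stPend := stPend s - {p} \<rparr>)"

definition plc_final :: "'a plc_state \<Rightarrow> bool" where
  "plc_final s \<longleftrightarrow> stPend s = {} \<and> stUpd s = {}"

end

theory Submission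
  imports Defs
begin

text \<open>The run of the procedure preserves an invariant: the set M is always derivable from A,
  and every counter equals the number of premises of its rule instance that have not yet
  been processed.  Soundness follows since the conclusion can be weakened from M to B.
  For completeness, at termination every instance inside the initialisation window whose
  premises lie in M has fired, and predictivity shows that the instances outside the window
  either have a premise below l(A), which cannot lie in M, or conclusions entirely above u(B).
  Hence M together with all atoms above u(B) is closed under all shifts of the rules of
  \<Sigma>, a semantic property preserved by derivations, so B is contained in it.
  Termination: each step decreases, lexicographically, the number of atoms not yet in M,
  the size of the update set and the size of the pending list.\<close>

lemma mem_shift: "(y, i) \<in> shift M j \<longleftrightarrow> (y, i - j) \<in> M"
  unfolding shift_def by (force simp: image_iff)

lemma mem_shift_iff: "x \<in> shift M j \<longleftrightarrow> (fst x, snd x - j) \<in> M"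
  using mem_shift[of "fst x" "snd x"] by simp

lemma shift_0 [simp]: "shift M 0 = M"
  by (auto simp: mem_shift_iff)

lemma shift_shift: "shift (shift M i) j = shift M (i + j)"
  by (auto simp: mem_shift_iff algebra_simps)

lemma shift_Un: "shift (X \<union> Y) j = shift X j \<union> shift Y j"
  unfolding shift_def by auto

lemma inj_on_shift_fun: "inj_on (\<lambda>(y::'a, i::int). (y, i + j)) M"
  by (auto simp: inj_on_def)

lemma finite_shift_iff [simp]: "finite (shift M j) \<longleftrightarrow> finite M"
  unfolding shift_def using finite_image_iff[OF inj_on_shift_fun] by blast

lemma card_shift [simp]: "card (shift M j) = card M"
  unfolding shift_def using card_image[OF inj_on_shift_fun] by blast

lemma lo_le: "finite X \<Longrightarrow> x \<in> X \<Longrightarrow> lo X \<le> snd x"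
  unfolding lo_def by (simp add: Min_le)

lemma up_ge: "finite X \<Longrightarrow> x \<in> X \<Longrightarrow> snd x \<le> up X"
  unfolding up_def by (simp add: Max_ge)

lemma lo_attained: "finite X \<Longrightarrow> X \<noteq> {} \<Longrightarrow> \<exists>x\<in>X. snd x = lo X"
  unfolding lo_def by (metis (mono_tags) Min_in finite_imageI image_iff image_is_empty)

definition closed_under :: "'a tattr set \<Rightarrow> 'a fml \<Rightarrow> bool" where
  "closed_under T f \<longleftrightarrow> (\<forall>k. shift (fst f) k \<subseteq> T \<longrightarrow> shift (snd f) k \<subseteq> T)"

lemma derivable_closed_under:
  assumes "derivable \<Sigma> f" and "\<forall>g\<in>\<Sigma>. closed_under T g"
  shows "closed_under T f"
  using assms(1)
proof induction
  case (Hyp f)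
  then show ?case using assms(2) by blast
next
  case (Ax A B)
  then show ?case by (auto simp: closed_under_def shift_Un)
next
  case (Cut A B C D)
  show ?case unfolding closed_under_def fst_conv snd_conv
  proof (intro allI impI)
    fix k assume AC: "shift (A \<union> C) k \<subseteq> T"
    then have "shift B k \<subseteq> T" using Cut.IH(1) by (auto simp: closed_under_def shift_Un)
    with AC have "shift (B \<union> C) k \<subseteq> T" by (auto simp: shift_Un)
    then show "shift D k \<subseteq> T" using Cut.IH(2) by (auto simp: closed_under_def)
  qed
next
  case (Shf A B i)
  then show ?case by (auto simp: closed_under_def shift_shift)
qed

lemma derivable_rhs_subset:
  assumes "derivable \<Sigma> (A, X)" "finite A" "finite X" "Y \<subseteq> X"
  shows "derivable \<Sigma> (A, Y)"
proof -
  have fY: "finite Y" using assms finite_subset by blast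
  have "derivable \<Sigma> (Y \<union> X, Y)" using Ax[OF fY assms(3)] .
  then have "derivable \<Sigma> (X \<union> {}, Y)" using assms(4) by (simp add: sup.absorb2)
  from Cut[OF assms(2,3) finite.emptyI fY assms(1) this] show ?thesis by simp
qed

lemma derivable_rhs_Un:
  assumes "derivable \<Sigma> (A, X)" "derivable \<Sigma> (A, Y)" "finite A" "finite X" "finite Y"
  shows "derivable \<Sigma> (A, X \<union> Y)"
proof -
  have "derivable \<Sigma> ((X \<union> Y) \<union> {}, X \<union> Y)" using Ax[of "X \<union> Y" "{}"] assms by simp
  then have "derivable \<Sigma> (Y \<union> X, X \<union> Y)" by (simp add: Un_commute)
  then have "derivable \<Sigma> (A \<union> X, X \<union> Y)" using Cut[OF assms(3,5,4) _ assms(2)] assms by simp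
  then have "derivable \<Sigma> (X \<union> A, X \<union> Y)" by (simp add: Un_commute)
  from Cut[OF assms(3,4,3) _ assms(1) this] assms show ?thesis by simp
qed

lemma derivable_apply_shifted_rule:
  assumes "derivable \<Sigma> (A, M)" "(E, F) \<in> \<Sigma>" "shift E j \<subseteq> M"
    and "finite A" "finite M" "finite E" "finite F"
  shows "derivable \<Sigma> (A, M \<union> shift F j)"
proof -
  have "derivable \<Sigma> (A, shift E j)" using derivable_rhs_subset assms by blast
  moreover have "derivable \<Sigma> (shift E j \<union> {}, shift F j)"
    using Shf[OF assms(6,7) Hyp[OF assms(2)]] by simp
  ultimately have "derivable \<Sigma> (A \<union> {}, shift F j)"
    using Cut[OF assms(4) _ finite.emptyI, of "shift E j" "shift F j"] assms by simp
  then show ?thesis using derivable_rhs_Un[OF assms(1) _ assms(4,5)] assms by simp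
qed

abbreviation inst_lhs :: "'a fml \<times> int \<Rightarrow> 'a tattr set" where
  "inst_lhs p \<equiv> shift (fst (fst p)) (snd p)"

abbreviation inst_rhs :: "'a fml \<times> int \<Rightarrow> 'a tattr set" where
  "inst_rhs p \<equiv> shift (snd (fst p)) (snd p)"

locale plc_setting =
  fixes \<Sigma> :: "('a::finite) fml set" and A B :: "'a tattr set"
  assumes finite_\<Sigma>: "finite \<Sigma>" and predictive_\<Sigma>: "predictive_theory \<Sigma>"
    and predictive_AB: "predictive (A, B)"
begin

abbreviation "idx \<equiv> plc_idx \<Sigma> A (up B)"
abbreviation "step \<equiv> plc_step \<Sigma> A (up B)"

lemma finite_A: "finite A" and finite_B: "finite B"
  using predictive_AB by (auto simp: predictive_def is_formula_def)

lemma rule_facts: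
  assumes "(E, F) \<in> \<Sigma>"
  shows "finite E" "finite F" "E \<noteq> {}" "F \<noteq> {}" "\<And>e f. e \<in> E \<Longrightarrow> f \<in> F \<Longrightarrow> snd e \<le> snd f"
proof -
  have p: "predictive (E, F)" using assms predictive_\<Sigma> unfolding predictive_theory_def by blast
  then show "finite E" "finite F" "E \<noteq> {}" "F \<noteq> {}" unfolding predictive_def is_formula_def by auto
  fix e f assume "e \<in> E" "f \<in> F"
  then show "snd e \<le> snd f" using p unfolding predictive_def by (metis fst_conv prod.collapse snd_conv)
qed

lemma idxD:
  "p \<in> idx \<Longrightarrow> fst p \<in> \<Sigma> \<and> lo A - lo (fst (fst p)) \<le> snd p \<and> snd p \<le> up B - lo (snd (fst p))"
  by (cases p) (auto simp: plc_idx_def)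

lemma idxI: "(E, F) \<in> \<Sigma> \<Longrightarrow> lo A - lo E \<le> j \<Longrightarrow> j \<le> up B - lo F \<Longrightarrow> ((E, F), j) \<in> idx"
  by (auto simp: plc_idx_def)

lemma finite_idx: "finite idx"
proof (rule finite_subset)
  show "idx \<subseteq> (\<Union>f\<in>\<Sigma>. {f} \<times> {lo A - lo (fst f) .. up B - lo (snd f)})"
    using idxD by fastforce
  show "finite (\<Union>f\<in>\<Sigma>. {f} \<times> {lo A - lo (fst f) .. up B - lo (snd f)})"
    using finite_\<Sigma> by auto
qed

lemma idx_rule_facts: "p \<in> idx \<Longrightarrow> finite (fst (fst p)) \<and> finite (snd (fst p)) \<and> fst (fst p) \<noteq> {}"
  using idxD rule_facts by (metis prod.collapse)

definition universe :: "'a tattr set" where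
  "universe = A \<union> (\<Union>p\<in>idx. inst_rhs p)"

lemma finite_universe: "finite universe"
  unfolding universe_def using finite_idx finite_A idx_rule_facts by auto

text \<open>Premises of \<open>p\<close> in \<open>stM s - stUpd s\<close> have been processed; a pending \<open>p\<close>
  still awaits the decrement for the atom most recently removed from the update set.\<close>

definition expected_count :: "'a plc_state \<Rightarrow> 'a fml \<times> int \<Rightarrow> int" where
  "expected_count s p = int (card (fst (fst p))) - int (card (inst_lhs p \<inter> (stM s - stUpd s)))
     + (if p \<in> stPend s then 1 else 0)"

definition Inv :: "'a plc_state \<Rightarrow> bool" where
  "Inv s \<longleftrightarrow> A \<subseteq> stM s \<and> stUpd s \<subseteq> stM s \<and> stM s \<subseteq> universe \<and> stPend s \<subseteq> idx \<and>
    (\<forall>p\<in>idx. stCnt s p = expected_count s p) \<and>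
    (\<forall>p\<in>idx. stCnt s p = 0 \<longrightarrow> inst_rhs p \<subseteq> stM s) \<and>
    derivable \<Sigma> (A, stM s)"

lemma InvD:
  assumes "Inv s"
  shows "A \<subseteq> stM s" "stUpd s \<subseteq> stM s" "stM s \<subseteq> universe" "stPend s \<subseteq> idx"
    "\<And>p. p \<in> idx \<Longrightarrow> stCnt s p = expected_count s p"
    "\<And>p. p \<in> idx \<Longrightarrow> stCnt s p = 0 \<Longrightarrow> inst_rhs p \<subseteq> stM s"
    "derivable \<Sigma> (A, stM s)"
  using assms unfolding Inv_def by blast+

lemma Inv_finite:
  assumes "Inv s"
  shows "finite (stM s)" "finite (stUpd s)" "finite (stPend s)"
  using InvD[OF assms] finite_universe finite_idx by (meson finite_subset)+

lemma Inv_init: "Inv (plc_init A)"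
proof -
  have "derivable \<Sigma> (A \<union> {}, A)" using Ax[of A "{}"] finite_A by simp
  moreover have "\<forall>p\<in>idx. stCnt (plc_init A) p = int (card (fst (fst p)))"
    by (auto simp: plc_init_def split: prod.split)
  moreover have "\<forall>p\<in>idx. card (fst (fst p)) \<noteq> 0" using idx_rule_facts by auto
  ultimately show ?thesis
    by (auto simp: Inv_def plc_init_def universe_def expected_count_def)
qed

lemma Inv_pick:
  assumes I: "Inv s" and "stPend s = {}" "y \<in> stUpd s"
  shows "Inv (s\<lparr>stUpd := stUpd s - {y}, stPend := plc_list \<Sigma> A (up B) y\<rparr>)" (is "Inv ?s'")
proof -
  have processed: "stM s - (stUpd s - {y}) = insert y (stM s - stUpd s)"
    using InvD(2)[OF I] assms by auto
  have "stCnt ?s' p = expected_count ?s' p" if p: "p \<in> idx" for p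
  proof -
    have "finite (inst_lhs p)" using idx_rule_facts p by simp
    moreover have "p \<in> stPend ?s' \<longleftrightarrow> y \<in> inst_lhs p" using p unfolding plc_list_def by auto
    moreover have "y \<notin> stM s - stUpd s" using assms by blast
    ultimately show ?thesis
      using InvD(5)[OF I p] assms(2)
      by (simp add: expected_count_def processed Int_insert_right card_insert_if)
  qed
  moreover have "stPend ?s' \<subseteq> idx" unfolding plc_list_def by auto
  ultimately show ?thesis using InvD[OF I] unfolding Inv_def by auto
qed

lemma Inv_dec_nonzero:
  assumes I: "Inv s" and p: "p \<in> stPend s" and "stCnt s p - 1 \<noteq> 0"
  shows "Inv (s\<lparr>stCnt := (stCnt s)(p := stCnt s p - 1), stPend := stPend s - {p}\<rparr>)" (is "Inv ?s'")
proof -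
  have "stCnt ?s' q = expected_count ?s' q" if "q \<in> idx" for q
    using InvD(5)[OF I that] p by (cases "q = p") (auto simp: expected_count_def)
  moreover have "inst_rhs q \<subseteq> stM ?s'" if "q \<in> idx" "stCnt ?s' q = 0" for q
    using InvD(6)[OF I] that assms(3) by (auto split: if_splits)
  ultimately show ?thesis using InvD(1-4,7)[OF I] p unfolding Inv_def by auto
qed

lemma Inv_dec_zero:
  assumes I: "Inv s" and p: "((E, F), j) \<in> stPend s" and zero: "stCnt s ((E, F), j) - 1 = 0"
  shows "Inv (s\<lparr>stM := stM s \<union> (shift F j - stM s), stUpd := stUpd s \<union> (shift F j - stM s),
      stCnt := (stCnt s)(((E, F), j) := stCnt s ((E, F), j) - 1),
      stPend := stPend s - {((E, F), j)}\<rparr>)" (is "Inv ?s'")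
proof -
  have pI: "((E, F), j) \<in> idx" using InvD(4)[OF I] p by blast
  have EF: "(E, F) \<in> \<Sigma>" using idxD[OF pI] by simp
  note EF_props = rule_facts[OF EF]
  let ?V = "stM s - stUpd s"
  have "stCnt s ((E, F), j) = int (card E) - int (card (shift E j \<inter> ?V)) + 1"
    using InvD(5)[OF I pI] p by (simp add: expected_count_def)
  with zero have "card (shift E j) \<le> card (shift E j \<inter> ?V)" by simp
  then have "shift E j \<inter> ?V = shift E j"
    using card_seteq[of "shift E j" "shift E j \<inter> ?V"] EF_props by auto
  then have "shift E j \<subseteq> stM s" by blast
  then have "derivable \<Sigma> (A, stM s \<union> shift F j)"
    using derivable_apply_shifted_rule[OF InvD(7)[OF I] EF] finite_A Inv_finite[OF I] EF_props
    by blast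
  moreover have M': "stM ?s' = stM s \<union> shift F j" by auto
  moreover have "stM ?s' \<subseteq> universe"
    using pI InvD(3)[OF I] unfolding M' universe_def by force
  moreover have processed: "stM ?s' - stUpd ?s' = ?V" by auto
  have "stCnt ?s' q = expected_count ?s' q" if "q \<in> idx" for q
    using InvD(5)[OF I that] p unfolding expected_count_def processed
    by (cases "q = ((E, F), j)") auto
  moreover have "inst_rhs q \<subseteq> stM ?s'" if "q \<in> idx" "stCnt ?s' q = 0" for q
    using InvD(6)[OF I that(1)] that(2) by (cases "q = ((E, F), j)") auto
  ultimately show ?thesis using InvD(1-4)[OF I] p unfolding Inv_def by auto
qed

lemma Inv_step: "Inv s \<Longrightarrow> step s s' \<Longrightarrow> Inv s'"
  by (erule plc_step.cases) (blast intro: Inv_pick Inv_dec_nonzero Inv_dec_zero)+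

lemma Inv_reachable: "step\<^sup>*\<^sup>* (plc_init A) s \<Longrightarrow> Inv s"
  by (induction rule: rtranclp_induct) (auto intro: Inv_init Inv_step)

definition plc_order :: "('a plc_state \<times> 'a plc_state) set" where
  "plc_order = measures [\<lambda>s. card (universe - stM s), \<lambda>s. card (stUpd s), \<lambda>s. card (stPend s)]"

lemma wf_plc_order: "wf plc_order"
  unfolding plc_order_def by simp

lemma step_plc_order:
  assumes I: "Inv s" and st: "step s s'"
  shows "(s', s) \<in> plc_order"
  using st
proof cases
  case (pick y)
  then show ?thesis using card_Diff1_less[OF Inv_finite(2)[OF I]] by (simp add: plc_order_def)
next
  case (dec_nonzero p)
  then show ?thesis using card_Diff1_less[OF Inv_finite(3)[OF I]] by (simp add: plc_order_def)
next
  case (dec_zero p E F j new)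
  show ?thesis
  proof (cases "new = {}")
    case True
    with dec_zero have "stM s' = stM s" "stUpd s' = stUpd s" "stPend s' = stPend s - {p}" by auto
    then show ?thesis
      using dec_zero card_Diff1_less[OF Inv_finite(3)[OF I]] by (simp add: plc_order_def)
  next
    case False
    have "new \<subseteq> universe" using InvD(4)[OF I] dec_zero unfolding universe_def by force
    with False dec_zero have "universe - stM s' \<subset> universe - stM s" by auto
    then have "card (universe - stM s') < card (universe - stM s)"
      using psubset_card_mono finite_universe by blast
    then show ?thesis by (simp add: plc_order_def)
  qed
qed

lemma no_infinite_run: "\<not> (\<exists>r. r 0 = plc_init A \<and> (\<forall>n. step (r n) (r (Suc n))))"
proof
  assume "\<exists>r. r 0 = plc_init A \<and> (\<forall>n. step (r n) (r (Suc n)))"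
  then obtain r where r0: "r 0 = plc_init A" and run: "\<And>n. step (r n) (r (Suc n))" by blast
  have "Inv (r n)" for n
    by (induction n) (use r0 run Inv_init Inv_step in auto)
  then have "(r (Suc n), r n) \<in> plc_order" for n using step_plc_order run by blast
  then show False using wf_plc_order unfolding wf_iff_no_infinite_down_chain by blast
qed

lemma step_exists: "Inv s \<Longrightarrow> \<not> plc_final s \<Longrightarrow> \<exists>s'. step s s'"
  unfolding plc_final_def
  by (metis ex_in_conv plc_step.pick plc_step.dec_nonzero plc_step.dec_zero prod.collapse)

lemma final_reachable_from: "Inv s \<Longrightarrow> \<exists>s'. step\<^sup>*\<^sup>* s s' \<and> plc_final s'"
proof (induction s rule: wf_induct_rule[OF wf_plc_order])
  case (1 s)
  show ?case
  proof (cases "plc_final s")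
    case False
    then obtain s' where st: "step s s'" using step_exists "1.prems" by blast
    then obtain t where "step\<^sup>*\<^sup>* s' t" "plc_final t"
      using "1.IH" "1.prems" Inv_step step_plc_order by blast
    then show ?thesis using st by (meson converse_rtranclp_into_rtranclp)
  qed blast
qed

lemma Inv_lo_le: "Inv s \<Longrightarrow> x \<in> stM s \<Longrightarrow> lo A \<le> snd x"
proof -
  assume "Inv s" "x \<in> stM s"
  then have "x \<in> universe" using InvD(3) by blast
  then consider "x \<in> A" | E F j where "((E, F), j) \<in> idx" "x \<in> shift F j"
    unfolding universe_def by auto
  then show ?thesis
  proof cases
    case 1
    then show ?thesis using lo_le finite_A by blast
  next
    case 2
    have EF: "(E, F) \<in> \<Sigma>" and j: "lo A - lo E \<le> j" using idxD[OF 2(1)] by auto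
    obtain e where e: "e \<in> E" "snd e = lo E" using lo_attained rule_facts[OF EF] by blast
    have "(fst x, snd x - j) \<in> F" using 2(2) by (simp add: mem_shift_iff)
    then have "snd e \<le> snd x - j" using rule_facts(5)[OF EF e(1)] by fastforce
    then show ?thesis using e j by simp
  qed
qed

lemma final_fires:
  assumes I: "Inv s" and fin: "plc_final s"
    and "((E, F), j) \<in> idx" "shift E j \<subseteq> stM s"
  shows "shift F j \<subseteq> stM s"
proof -
  have "stCnt s ((E, F), j) = int (card E) - int (card (shift E j \<inter> stM s))"
    using InvD(5)[OF I assms(3)] fin by (simp add: plc_final_def expected_count_def)
  also have "shift E j \<inter> stM s = shift E j" using assms(4) by blast
  finally show ?thesis using InvD(6)[OF I assms(3)] by simp
qed

text \<open>A rule instance outside the initialisation window has its conclusion above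
  \<open>u(B)\<close> or, by predictivity, a premise below \<open>l(A)\<close>, hence not in \<open>M\<close>.\<close>

lemma final_closed_under:
  assumes I: "Inv s" and fin: "plc_final s" and EF: "(E, F) \<in> \<Sigma>"
  shows "closed_under (stM s \<union> {x. up B < snd x}) (E, F)"
  unfolding closed_under_def fst_conv snd_conv
proof (intro allI impI)
  fix k assume Ek: "shift E k \<subseteq> stM s \<union> {x. up B < snd x}"
  show "shift F k \<subseteq> stM s \<union> {x. up B < snd x}"
  proof (cases "up B < lo F + k")
    case True
    have "up B < snd x" if "x \<in> shift F k" for x
      using that True lo_le[OF rule_facts(2)[OF EF]] by (fastforce simp: mem_shift_iff)
    then show ?thesis by blast
  next
    case False
    obtain f where f: "f \<in> F" "snd f = lo F" using lo_attained rule_facts[OF EF] by blast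
    have "snd x - k \<le> lo F" if "x \<in> shift E k" for x
      using that rule_facts(5)[OF EF _ f(1)] f(2) by (fastforce simp: mem_shift_iff)
    with Ek False have EM: "shift E k \<subseteq> stM s" by fastforce
    obtain e where e: "e \<in> E" "snd e = lo E" using lo_attained rule_facts[OF EF] by blast
    have "(fst e, snd e + k) \<in> shift E k" using e(1) by (simp add: mem_shift)
    then have "lo A - lo E \<le> k" using EM Inv_lo_le[OF I] e(2) by fastforce
    with False have "((E, F), k) \<in> idx" using idxI[OF EF] by simp
    then show ?thesis using final_fires[OF I fin _ EM] by blast
  qed
qed

lemma final_complete:
  assumes I: "Inv s" and fin: "plc_final s" and "derivable \<Sigma> (A, B)"
  shows "B \<subseteq> stM s"
proof -
  let ?T = "stM s \<union> {x. up B < snd x}"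
  have "\<forall>g\<in>\<Sigma>. closed_under ?T g" using final_closed_under[OF I fin] by (metis prod.collapse)
  then have "closed_under ?T (A, B)" using derivable_closed_under[OF assms(3)] by blast
  moreover have "shift A 0 \<subseteq> ?T" using InvD(1)[OF I] by auto
  ultimately have "B \<subseteq> ?T" unfolding closed_under_def by (metis fst_conv snd_conv shift_0)
  then show ?thesis using up_ge[OF finite_B] by fastforce
qed

lemma Inv_sound: "Inv s \<Longrightarrow> B \<subseteq> stM s \<Longrightarrow> derivable \<Sigma> (A, B)"
  using derivable_rhs_subset InvD(7) Inv_finite(1) finite_A by blast

end

theorem theorem16:
  fixes \<Sigma> :: "('a::finite) fml set" and A B :: "'a tattr set"
  assumes "finite \<Sigma>" and "predictive_theory \<Sigma>" and "predictive (A, B)"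
  shows "(\<not> (\<exists>r. r 0 = plc_init A \<and> (\<forall>n. plc_step \<Sigma> A (up B) (r n) (r (Suc n))))) \<and>
         (\<exists>s. (plc_step \<Sigma> A (up B))\<^sup>*\<^sup>* (plc_init A) s \<and> plc_final s) \<and>
         (\<forall>s. (plc_step \<Sigma> A (up B))\<^sup>*\<^sup>* (plc_init A) s \<and> plc_final s \<longrightarrow>
           (derivable \<Sigma> (A, B) \<longleftrightarrow> B \<subseteq> stM s))"
proof -
  interpret plc_setting \<Sigma> A B using assms by unfold_locales
  show ?thesis
    using no_infinite_run final_reachable_from[OF Inv_init] Inv_reachable final_complete Inv_sound
    by blast
qed

end
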